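(* There is an absolute constant $c>0$ such that for all $n,k\ge1$ and every $k$-monotone sequence $S\in[n]^n$ (a sequence of length $n$ over keys $[n]$), ${\mathit LF}^k(S)\le c\,nk$.
   Context: A sequence $X=(x_1,\dots,x_m)$ contains a permutation pattern $\pi$ of length $k$ if there are indices $i_1<\dots<i_k$ with $x_{i_a}<x_{i_b}$ iff $\pi(a)<\pi(b)$; otherwise it avoids $\pi$. $X$ is $k$-monotone if it avoids $(1,2,\dots,k)$ or avoids $(k,k-1,\dots,1)$. For a BST $T$, $d_T(a,b)$ is the number of edges on the path between $a$ and $b$. $k$-lazy finger bound: fix a BST $T$ on $[n]$. A finger strategy consists of initial positions $\vec\ell\in[n]^k$ and a sequence $\vec f\in[k]^m$, where finger $f_t$ serves request $s_t$ and then sits at $s_t$; the other fingers stay where they are. With $\sigma(i,t)$ the position of finger $i$ just before time $t$ (and $\sigma(i,1)=\ell_i$), the cost is $\sum_{t=1}^m(1+d_T(s_t,\sigma(f_t,t)))$. Then ${\mathit LF}^k_T(S)$ is the minimum over strategies, and ${\mathit LF}^k(S)=\min_T{\mathit LF}^k_T(S)$ over BSTs $T$ on $[n]$. *)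

theory Defs
  imports Complex_Main "HOL-Library.Tree"
begin

text \<open>Sequences are lists (position a of the paper is list index a-1).\<close>

definition contains_pattern :: "nat list \<Rightarrow> nat list \<Rightarrow> bool" where
  "contains_pattern X pat \<longleftrightarrow>
     (\<exists>i :: nat \<Rightarrow> nat.
        (\<forall>a b. a < b \<and> b < length pat \<longrightarrow> i a < i b) \<and>
        (\<forall>a < length pat. i a < length X) \<and>
        (\<forall>a < length pat. \<forall>b < length pat. (X ! i a < X ! i b \<longleftrightarrow> pat ! a < pat ! b)))"

definition avoids_pattern :: "nat list \<Rightarrow> nat list \<Rightarrow> bool" where
  "avoids_pattern X pat \<longleftrightarrow> \<not> contains_pattern X pat"

definition k_monotone :: "nat \<Rightarrow> nat list \<Rightarrow> bool" where
  "k_monotone k X \<longleftrightarrow>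
     avoids_pattern X [1..<k+1] \<or> avoids_pattern X (rev [1..<k+1])"

definition bst_on :: "nat \<Rightarrow> nat tree \<Rightarrow> bool" where
  "bst_on n T \<longleftrightarrow> inorder T = [1..<n+1]"

fun root_path :: "nat tree \<Rightarrow> nat \<Rightarrow> nat list" where
  "root_path Leaf x = []"
| "root_path (Node l a r) x =
     a # (if x < a then root_path l x else if a < x then root_path r x else [])"

fun common_prefix_len :: "nat list \<Rightarrow> nat list \<Rightarrow> nat" where
  "common_prefix_len (x # xs) (y # ys) = (if x = y then Suc (common_prefix_len xs ys) else 0)"
| "common_prefix_len _ _ = 0"

text \<open>Number of edges on the tree path between keys a and b:
  depth a + depth b - 2 depth(lca a b).\<close>
definition tree_dist :: "nat tree \<Rightarrow> nat \<Rightarrow> nat \<Rightarrow> nat" where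
  "tree_dist T a b =
     length (root_path T a) + length (root_path T b)
       - 2 * common_prefix_len (root_path T a) (root_path T b)"

fun finger_cost :: "nat tree \<Rightarrow> (nat \<Rightarrow> nat) \<Rightarrow> nat list \<Rightarrow> nat list \<Rightarrow> nat" where
  "finger_cost T pos (s # ss) (f # fs) =
     1 + tree_dist T s (pos f) + finger_cost T (pos(f := s)) ss fs"
| "finger_cost T pos _ _ = 0"

definition LF_T :: "nat \<Rightarrow> nat \<Rightarrow> nat tree \<Rightarrow> nat list \<Rightarrow> nat" where
  "LF_T k n T S = Inf {finger_cost T l S fs | l fs.
       (\<forall>i \<in> {1..k}. l i \<in> {1..n}) \<and> length fs = length S \<and> set fs \<subseteq> {1..k}}"

definition LF :: "nat \<Rightarrow> nat \<Rightarrow> nat list \<Rightarrow> nat" where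
  "LF k n S = Inf {LF_T k n T S | T. bst_on n T}"

end

theory Submission
  imports Defs
begin

text \<open>Take the BST on [n] that is a single right-going path, so that d(x,y) = |x - y|.
  If S avoids (1,...,k), give request t to the finger numbered by the length of the
  longest increasing subsequence of S ending at t; this number is below k, and
  the requests given to one finger form a non-increasing subsequence.  Starting
  all fingers at n, each finger therefore only moves left and travels at most n - 1
  in total, so the cost is at most n + k(n - 1) \<le> 2nk.  If S avoids (k,...,1),
  use decreasing subsequences and start the fingers at 1.\<close>

fun right_spine :: "nat \<Rightarrow> nat \<Rightarrow> nat tree" where
  "right_spine a 0 = Leaf"
| "right_spine a (Suc m) = Node Leaf a (right_spine (Suc a) m)"

lemma inorder_right_spine: "inorder (right_spine a m) = [a..<a+m]"
  by (induction m arbitrary: a) (auto simp: upt_rec)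

lemma bst_on_right_spine: "bst_on n (right_spine 1 n)"
  unfolding bst_on_def inorder_right_spine by simp

lemma length_root_path_right_spine:
  "a \<le> x \<Longrightarrow> x < a + m \<Longrightarrow> length (root_path (right_spine a m) x) = x + 1 - a"
  by (induction m arbitrary: a) auto

lemma common_prefix_len_Nil_right: "common_prefix_len xs [] = 0"
  by (cases xs) auto

lemma common_prefix_len_root_path_right_spine:
  assumes "a \<le> x" "x < a + m" "a \<le> y" "y < a + m"
  shows "common_prefix_len (root_path (right_spine a m) x) (root_path (right_spine a m) y)
           = min x y + 1 - a"
  using assms
proof (induction m arbitrary: a)
  case 0
  then show ?case by simp
next
  case (Suc m)
  show ?case
  proof (cases "x = a \<or> y = a")
    case True
    then show ?thesis using Suc.prems by (auto simp: common_prefix_len_Nil_right)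
  next
    case False
    then show ?thesis using Suc.IH[of "Suc a"] Suc.prems by auto
  qed
qed

lemma tree_dist_right_spine:
  assumes "x \<in> {1..n}" "y \<in> {1..n}"
  shows "int (tree_dist (right_spine 1 n) x y) = \<bar>int x - int y\<bar>"
  using assms length_root_path_right_spine[of 1 x n] length_root_path_right_spine[of 1 y n]
    common_prefix_len_root_path_right_spine[of 1 x n y]
  unfolding tree_dist_def by auto

lemma sum_fun_upd:
  fixes \<phi> :: "'b \<Rightarrow> 'c::ab_group_add"
  assumes "finite K" "f \<in> K"
  shows "(\<Sum>i\<in>K. \<phi> ((pos(f := s)) i)) = (\<Sum>i\<in>K. \<phi> (pos i)) - \<phi> (pos f) + \<phi> s"
proof -
  have "(\<Sum>i\<in>K - {f}. \<phi> ((pos(f := s)) i)) = (\<Sum>i\<in>K - {f}. \<phi> (pos i))"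
    by (rule sum.cong) auto
  then show ?thesis
    using assms by (simp add: sum.remove algebra_simps)
qed

text \<open>Amortization: the potential of the finger positions never increases and pays for
  every move, so only the unit cost per request and the initial potential remain.\<close>

lemma finger_cost_potential_bound:
  fixes \<phi> :: "nat \<Rightarrow> int" and le :: "nat \<Rightarrow> nat \<Rightarrow> bool" (infix "\<preceq>" 50)
  assumes move: "\<And>x y. x \<in> A \<Longrightarrow> y \<in> A \<Longrightarrow> x \<preceq> y \<Longrightarrow> int (tree_dist T y x) \<le> \<phi> x - \<phi> y"
    and nonneg: "\<And>x. x \<in> A \<Longrightarrow> \<phi> x \<ge> 0" and "finite K"
    and "length fs = length ss" "set fs \<subseteq> K" "\<forall>i\<in>K. pos i \<in> A" "set ss \<subseteq> A"
    and "\<forall>j<length ss. pos (fs!j) \<preceq> ss!j"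
    and "\<forall>i j. i < j \<longrightarrow> j < length ss \<longrightarrow> fs!i = fs!j \<longrightarrow> ss!i \<preceq> ss!j"
  shows "int (finger_cost T pos ss fs) \<le> int (length ss) + (\<Sum>i\<in>K. \<phi> (pos i))"
  using assms(4-)
proof (induction ss arbitrary: pos fs)
  case Nil
  have "(\<Sum>i\<in>K. \<phi> (pos i)) \<ge> 0" using Nil nonneg by (intro sum_nonneg) auto
  then show ?case by simp
next
  case (Cons s ss)
  obtain f fs' where fs: "fs = f # fs'" using Cons.prems(1) by (cases fs) auto
  have fK: "f \<in> K" and s: "s \<in> A" using Cons.prems(2,4) fs by auto
  have "pos f \<in> A" using Cons.prems(3) fK by auto
  have "pos f \<preceq> s" using Cons.prems(5) fs by force
  let ?pos = "pos(f := s)"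
  have IH: "int (finger_cost T ?pos ss fs') \<le> int (length ss) + (\<Sum>i\<in>K. \<phi> (?pos i))"
  proof (rule Cons.IH)
    show "\<forall>j<length ss. ?pos (fs'!j) \<preceq> ss!j"
    proof (intro allI impI)
      fix j assume j: "j < length ss"
      show "?pos (fs'!j) \<preceq> ss!j"
      proof (cases "fs'!j = f")
        case True
        then show ?thesis using Cons.prems(6) j fs
          by (metis Suc_mono length_Cons nth_Cons_0 nth_Cons_Suc zero_less_Suc fun_upd_same)
      next
        case False
        then show ?thesis using Cons.prems(5) j fs
          by (metis Suc_mono fun_upd_other length_Cons nth_Cons_Suc)
      qed
    qed
    show "\<forall>i j. i < j \<longrightarrow> j < length ss \<longrightarrow> fs'!i = fs'!j \<longrightarrow> ss!i \<preceq> ss!j"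
      using Cons.prems(6) fs by (metis Suc_mono length_Cons nth_Cons_Suc)
  qed (use Cons.prems fs s in auto)
  have "int (finger_cost T pos (s#ss) fs)
          = 1 + int (tree_dist T s (pos f)) + int (finger_cost T ?pos ss fs')"
    using fs by simp
  also have "\<dots> \<le> 1 + (\<phi> (pos f) - \<phi> s) + (int (length ss) + (\<Sum>i\<in>K. \<phi> (?pos i)))"
    using move[OF \<open>pos f \<in> A\<close> s \<open>pos f \<preceq> s\<close>] IH by linarith
  also have "\<dots> = int (length (s#ss)) + (\<Sum>i\<in>K. \<phi> (pos i))"
    using sum_fun_upd[OF \<open>finite K\<close> fK, of \<phi> pos s] by simp
  finally show ?case .
qed

lemma LF_le_finger_cost:
  assumes "bst_on n T" "\<forall>i \<in> {1..k}. l i \<in> {1..n}" "length fs = length S" "set fs \<subseteq> {1..k}"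
  shows "LF k n S \<le> finger_cost T l S fs"
proof -
  have "LF_T k n T S \<le> finger_cost T l S fs"
    unfolding LF_T_def using assms by (intro cInf_lower) auto
  moreover have "LF k n S \<le> LF_T k n T S"
    unfolding LF_def using assms by (intro cInf_lower) auto
  ultimately show ?thesis by simp
qed

definition rel_chain :: "(nat \<Rightarrow> nat \<Rightarrow> bool) \<Rightarrow> nat list \<Rightarrow> nat \<Rightarrow> (nat \<Rightarrow> nat) \<Rightarrow> bool" where
  "rel_chain R X m idx \<longleftrightarrow>
     (\<forall>a b. a < b \<and> b < m \<longrightarrow> idx a < idx b \<and> R (X ! idx a) (X ! idx b)) \<and>
     (\<forall>a<m. idx a < length X)"

definition chain_rank :: "(nat \<Rightarrow> nat \<Rightarrow> bool) \<Rightarrow> nat list \<Rightarrow> nat \<Rightarrow> nat" where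
  "chain_rank R X j = Max {m. \<exists>idx. m > 0 \<and> idx (m - 1) = j \<and> rel_chain R X m idx}"

lemma rel_chain_index_ge: "rel_chain R X m idx \<Longrightarrow> a < m \<Longrightarrow> a \<le> idx a"
proof (induction a)
  case (Suc a)
  then have "idx a < idx (Suc a)" unfolding rel_chain_def by auto
  then show ?case using Suc by auto
qed simp

lemma finite_chain_lengths:
  "finite {m. \<exists>idx. m > 0 \<and> idx (m - 1) = j \<and> rel_chain R X m idx}"
proof (rule finite_subset[of _ "{..Suc j}"])
  show "{m. \<exists>idx. m > 0 \<and> idx (m - 1) = j \<and> rel_chain R X m idx} \<subseteq> {..Suc j}"
  proof
    fix m assume "m \<in> {m. \<exists>idx. m > 0 \<and> idx (m - 1) = j \<and> rel_chain R X m idx}"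
    then show "m \<in> {..Suc j}"
      using rel_chain_index_ge[of R X m _ "m - 1"] by fastforce
  qed
qed simp

lemma chain_rank_ge_length:
  assumes "m > 0" "idx (m - 1) = j" "rel_chain R X m idx"
  shows "m \<le> chain_rank R X j"
  using assms unfolding chain_rank_def by (intro Max_ge[OF finite_chain_lengths]) auto

lemma rel_chain_singleton: "j < length X \<Longrightarrow> rel_chain R X 1 (\<lambda>_. j)"
  unfolding rel_chain_def by auto

lemma chain_rank_pos: "j < length X \<Longrightarrow> chain_rank R X j \<ge> 1"
  using chain_rank_ge_length[OF _ _ rel_chain_singleton] by simp

lemma chain_rank_attained:
  assumes "j < length X"
  obtains idx where "chain_rank R X j > 0" "idx (chain_rank R X j - 1) = j"
    "rel_chain R X (chain_rank R X j) idx"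
proof -
  have "{m. \<exists>idx. m > 0 \<and> idx (m - 1) = j \<and> rel_chain R X m idx} \<noteq> {}"
    using rel_chain_singleton[OF assms] by force
  from Max_in[OF finite_chain_lengths this] show ?thesis
    using that unfolding chain_rank_def by auto
qed

lemma chain_rank_less:
  assumes "j < length X" "\<forall>idx. \<not> rel_chain R X k idx"
  shows "chain_rank R X j < k"
proof (rule ccontr)
  assume "\<not> chain_rank R X j < k"
  moreover obtain idx where "rel_chain R X (chain_rank R X j) idx"
    using chain_rank_attained[OF assms(1)] by blast
  ultimately have "rel_chain R X k idx" unfolding rel_chain_def by auto
  then show False using assms(2) by blast
qed

text \<open>Appending position j to a longest chain ending at i.\<close>

lemma chain_rank_increase:
  assumes trans: "\<And>x y z. R x y \<Longrightarrow> R y z \<Longrightarrow> R x z"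
    and ij: "i < j" "j < length X" and R: "R (X!i) (X!j)"
  shows "chain_rank R X i < chain_rank R X j"
proof -
  let ?m = "chain_rank R X i"
  obtain idx where m: "?m > 0" and last: "idx (?m - 1) = i" and chain: "rel_chain R X ?m idx"
    using chain_rank_attained[of i X R] ij by auto
  define idx' where "idx' = idx(?m := j)"
  have "rel_chain R X (?m + 1) idx'"
    unfolding rel_chain_def
  proof (rule conjI; intro allI impI)
    fix a b assume ab: "a < b \<and> b < ?m + 1"
    show "idx' a < idx' b \<and> R (X ! idx' a) (X ! idx' b)"
    proof (cases "b = ?m")
      case True
      show ?thesis
      proof (cases "a = ?m - 1")
        case True
        then show ?thesis using \<open>b = ?m\<close> ij R last m unfolding idx'_def by auto
      next
        case False
        then have "a < ?m - 1" "?m - 1 < ?m" using ab \<open>b = ?m\<close> m by auto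
        then have "idx a < idx (?m - 1) \<and> R (X ! idx a) (X ! idx (?m - 1))"
          using chain unfolding rel_chain_def by blast
        then have "idx a < j \<and> R (X ! idx a) (X ! j)"
          using last ij trans[OF _ R] by auto
        then show ?thesis using \<open>b = ?m\<close> \<open>a < ?m - 1\<close> unfolding idx'_def by auto
      qed
    next
      case False
      then show ?thesis using ab chain unfolding rel_chain_def idx'_def by auto
    qed
  next
    fix a assume "a < ?m + 1"
    then show "idx' a < length X" using chain ij unfolding rel_chain_def idx'_def by auto
  qed
  then show ?thesis using chain_rank_ge_length[of "?m + 1" idx' j R X] unfolding idx'_def by simp
qed

lemma contains_pattern_if_rel_chain:
  assumes R: "R = (<) \<or> R = (>)" and chain: "rel_chain R X (length pat) idx"
    and pat: "\<And>a b. a < b \<Longrightarrow> b < length pat \<Longrightarrow> R (pat!a) (pat!b)"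
  shows "contains_pattern X pat"
  unfolding contains_pattern_def
proof (intro exI[of _ idx] conjI allI impI)
  have ordered: "(X ! idx a < X ! idx b) = (pat ! a < pat ! b) \<and>
                 (X ! idx b < X ! idx a) = (pat ! b < pat ! a)"
    if "a < b" "b < length pat" for a b
  proof -
    have "R (X ! idx a) (X ! idx b)" "R (pat ! a) (pat ! b)"
      using chain pat that unfolding rel_chain_def by auto
    with R show ?thesis by (elim disjE) auto
  qed
  fix a b assume "a < length pat" "b < length pat"
  then show "(X ! idx a < X ! idx b) = (pat ! a < pat ! b)"
    using ordered[of a b] ordered[of b a] by (cases a b rule: linorder_cases) auto
qed (use chain in \<open>auto simp: rel_chain_def\<close>)

lemma k_monotone_no_rel_chain:
  assumes "k_monotone k X"
  obtains R where "R = (<) \<or> R = (>)" "\<forall>idx. \<not> rel_chain R X k idx"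
proof -
  have "\<not> rel_chain (<) X k idx" if "avoids_pattern X [1..<k+1]" for idx
    using that contains_pattern_if_rel_chain[of "(<)" X "[1..<k+1]" idx]
    by (auto simp: avoids_pattern_def simp del: upt_Suc)
  moreover have "\<not> rel_chain (>) X k idx" if "avoids_pattern X (rev [1..<k+1])" for idx
  proof
    assume "rel_chain (>) X k idx"
    moreover have "rev [1..<k+1] ! b < rev [1..<k+1] ! a" if "a < b" "b < k" for a b
      using that by (simp add: rev_nth del: upt_Suc)
    ultimately show False
      using that contains_pattern_if_rel_chain[of "(>)" X "rev [1..<k+1]" idx]
      by (auto simp: avoids_pattern_def simp del: upt_Suc)
  qed
  ultimately show ?thesis
    using assms that unfolding k_monotone_def by blast
qed

lemma LF_le_chain_rank_strategy:
  fixes \<phi> :: "nat \<Rightarrow> int"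
  assumes "bst_on n T" and trans: "\<And>x y z. R x y \<Longrightarrow> R y z \<Longrightarrow> R x z"
    and no_chain: "\<forall>idx. \<not> rel_chain R S k idx" and S: "set S \<subseteq> {1..n}"
    and p: "p \<in> {1..n}" "\<And>x. x \<in> {1..n} \<Longrightarrow> \<not> R p x"
    and move: "\<And>x y. x \<in> {1..n} \<Longrightarrow> y \<in> {1..n} \<Longrightarrow> \<not> R x y \<Longrightarrow>
                 int (tree_dist T y x) \<le> \<phi> x - \<phi> y"
    and nonneg: "\<And>x. x \<in> {1..n} \<Longrightarrow> \<phi> x \<ge> 0"
  shows "int (LF k n S) \<le> int (length S) + int k * \<phi> p"
proof -
  define fs where "fs = map (chain_rank R S) [0..<length S]"
  have len: "length fs = length S" unfolding fs_def by simp
  have fs: "set fs \<subseteq> {1..k}"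
    unfolding fs_def using chain_rank_pos chain_rank_less[OF _ no_chain]
    by (auto simp: less_imp_le)
  have "int (finger_cost T (\<lambda>_. p) S fs) \<le> int (length S) + (\<Sum>i\<in>{1..k}. \<phi> p)"
  proof (rule finger_cost_potential_bound[where le = "\<lambda>x y. \<not> R x y" and A = "{1..n}"])
    show "\<And>x y. x \<in> {1..n} \<Longrightarrow> y \<in> {1..n} \<Longrightarrow> \<not> R x y \<Longrightarrow>
            int (tree_dist T y x) \<le> \<phi> x - \<phi> y"
      by (fact move)
    show "\<And>x. x \<in> {1..n} \<Longrightarrow> \<phi> x \<ge> 0" by (fact nonneg)
    show "\<forall>j<length S. \<not> R p (S!j)" using p(2) S nth_mem by blast
    show "\<forall>i j. i < j \<longrightarrow> j < length S \<longrightarrow> fs!i = fs!j \<longrightarrow> \<not> R (S!i) (S!j)"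
    proof (intro allI impI)
      fix i j assume "i < j" "j < length S" "fs!i = fs!j"
      then have "chain_rank R S i = chain_rank R S j" unfolding fs_def by simp
      then show "\<not> R (S!i) (S!j)"
        using chain_rank_increase[of R, OF trans \<open>i < j\<close> \<open>j < length S\<close>] by auto
    qed
  qed (use len fs S p(1) in auto)
  moreover have "LF k n S \<le> finger_cost T (\<lambda>_. p) S fs"
    using LF_le_finger_cost[OF \<open>bst_on n T\<close> _ len fs] p by auto
  ultimately show ?thesis by simp
qed

lemma LF_le_if_no_monotone_chain:
  assumes R: "R = (<) \<or> R = (>)" and "\<forall>idx. \<not> rel_chain R S k idx"
    and "set S \<subseteq> {1..n}" "n \<ge> 1"
  shows "int (LF k n S) \<le> int (length S) + int k * (int n - 1)"
  using R
proof
  assume "R = (<)"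
  have "int (LF k n S) \<le> int (length S) + int k * (\<lambda>x. int x - 1) n"
  proof (rule LF_le_chain_rank_strategy[OF bst_on_right_spine])
    fix x y :: nat assume "x \<in> {1..n}" "y \<in> {1..n}" "\<not> R x y"
    then show "int (tree_dist (right_spine 1 n) y x) \<le> (int x - 1) - (int y - 1)"
      using tree_dist_right_spine[of y n x] \<open>R = (<)\<close> by auto
  qed (use assms \<open>R = (<)\<close> in auto)
  then show ?thesis by simp
next
  assume "R = (>)"
  have "int (LF k n S) \<le> int (length S) + int k * (\<lambda>x. int n - int x) 1"
  proof (rule LF_le_chain_rank_strategy[OF bst_on_right_spine])
    fix x y :: nat assume "x \<in> {1..n}" "y \<in> {1..n}" "\<not> R x y"
    then show "int (tree_dist (right_spine 1 n) y x) \<le> (int n - int x) - (int n - int y)"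
      using tree_dist_right_spine[of y n x] \<open>R = (>)\<close> by auto
  qed (use assms \<open>R = (>)\<close> in auto)
  then show ?thesis by simp
qed

theorem mainTheorem5:
  shows "\<exists>c::real. c > 0 \<and>
    (\<forall>n k :: nat. \<forall>S :: nat list.
       n \<ge> 1 \<longrightarrow> k \<ge> 1 \<longrightarrow> length S = n \<longrightarrow> set S \<subseteq> {1..n} \<longrightarrow> k_monotone k S \<longrightarrow>
       real (LF k n S) \<le> c * real n * real k)"
proof (intro exI[of _ 2] conjI allI impI)
  fix n k :: nat and S :: "nat list"
  assume "n \<ge> 1" "k \<ge> 1" "length S = n" "set S \<subseteq> {1..n}" "k_monotone k S"
  then obtain R where "R = (<) \<or> R = (>)" "\<forall>idx. \<not> rel_chain R S k idx"
    using k_monotone_no_rel_chain by blast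
  then have "int (LF k n S) \<le> int n + int k * (int n - 1)"
    using LF_le_if_no_monotone_chain \<open>length S = n\<close> \<open>set S \<subseteq> {1..n}\<close> \<open>n \<ge> 1\<close> by blast
  then have "real_of_int (int (LF k n S)) \<le> real_of_int (int n + int k * (int n - 1))"
    by linarith
  then have "real (LF k n S) \<le> real n + real k * (real n - 1)" by simp
  also have "\<dots> \<le> 2 * real n * real k"
    using mult_right_mono[of 1 "real k" "real n"] \<open>k \<ge> 1\<close> by (simp add: algebra_simps)
  finally show "real (LF k n S) \<le> 2 * real n * real k" .
qed simp

end
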